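(* Let $d\ge 1$ and $p\in[0,1]$ with $p_d=\frac{2d+1}{4d}<p\le 1$, let $(S_n)$ be the $d$-dimensional elephant random walk with memory parameter $p$ described in the context, let $a=\frac{2dp-1}{2d-1}$, and let $L$ be the almost sure limit of $n^{-a}S_n$ as $n\to\infty$ (this limit exists and $n^{-a}S_n\to L$ also in mean square). Then $\mathbb{E}[L]=0$ and $$\mathbb{E}[LL^T]=\frac{1}{d(2a-1)\Gamma(2a)}I_d;$$ in particular $$\mathbb{E}[\|L\|^2]=\frac{1}{(2a-1)\Gamma(2a)}.$$
   Context: Multi-dimensional elephant random walk (MERW). Fix a dimension $d\ge1$ and a memory parameter $p\in[0,1]$. Let $(e_1,\dots,e_d)$ be the standard basis of $\mathbb{R}^d$, $I_d$ the $d\times d$ identity matrix, and $J_d$ the $d\times d$ cyclic permutation matrix with entries $(J_d)_{i,i+1}=1$ for $1\le i\le d-1$, $(J_d)_{d,1}=1$, and all other entries $0$. Set $S_0=0$. The first step $X_1$ is uniformly distributed on $\{\pm e_1,\dots,\pm e_d\}$. For $n\ge1$, given $\mathcal{F}_n=\sigma(X_1,\dots,X_n)$, $X_{n+1}=A_nX_{b_n}$, where $b_n$ is uniform on $\{1,\dots,n\}$ and $A_n$ is a random matrix, with $b_n$, $A_n$ independent of each other and of $\mathcal{F}_n$, equal to $I_d$ with probability $p$ and to each of $-I_d,\ \pm J_d,\dots,\pm J_d^{d-1}$ with probability $\frac{1-p}{2d-1}$. The position is $S_n=X_1+\dots+X_n$. $\Gamma$ is the Euler Gamma function. *)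

theory Defs
  imports "HOL-Probability.Probability"
begin

text \<open>Vectors of R^d are represented as functions nat => real (coordinates 0..d-1,
  0-indexed), d x d matrices as functions nat => nat => real.\<close>

definition unit_vec :: "nat \<Rightarrow> nat \<Rightarrow> real" where
  "unit_vec i = (\<lambda>j. if j = i then 1 else 0)"

definition idm :: "nat \<Rightarrow> nat \<Rightarrow> nat \<Rightarrow> real" where
  "idm d = (\<lambda>i j. if i < d \<and> j = i then 1 else 0)"

text \<open>Cyclic permutation matrix: (J)_{i,i+1} = 1, (J)_{d,1} = 1 (1-indexed), i.e.
  0-indexed entry (i, (i+1) mod d) equals 1.\<close>
definition Jmat :: "nat \<Rightarrow> nat \<Rightarrow> nat \<Rightarrow> real" where
  "Jmat d = (\<lambda>i j. if i < d \<and> j < d \<and> j = Suc i mod d then 1 else 0)"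

definition mat_mul :: "nat \<Rightarrow> (nat \<Rightarrow> nat \<Rightarrow> real) \<Rightarrow> (nat \<Rightarrow> nat \<Rightarrow> real) \<Rightarrow> nat \<Rightarrow> nat \<Rightarrow> real" where
  "mat_mul d A B = (\<lambda>i j. \<Sum>k<d. A i k * B k j)"

fun mat_pow :: "nat \<Rightarrow> (nat \<Rightarrow> nat \<Rightarrow> real) \<Rightarrow> nat \<Rightarrow> nat \<Rightarrow> nat \<Rightarrow> real" where
  "mat_pow d A 0 = idm d"
| "mat_pow d A (Suc k) = mat_mul d (mat_pow d A k) A"

definition mat_vec :: "nat \<Rightarrow> (nat \<Rightarrow> nat \<Rightarrow> real) \<Rightarrow> (nat \<Rightarrow> real) \<Rightarrow> nat \<Rightarrow> real" where
  "mat_vec d A x = (\<lambda>i. \<Sum>j<d. A i j * x j)"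

text \<open>Index set of the 2d-1 matrices other than I: (s,k) stands for (+/-) J^k,
  s = True meaning +.  These are -I = (False,0) and (s,k) with 1 <= k <= d-1.\<close>
definition other_idx :: "nat \<Rightarrow> (bool \<times> nat) set" where
  "other_idx d = {(False, 0)} \<union> {(s, k). 1 \<le> k \<and> k < d}"

definition signed_Jpow :: "nat \<Rightarrow> bool \<times> nat \<Rightarrow> nat \<Rightarrow> nat \<Rightarrow> real" where
  "signed_Jpow d sk = (\<lambda>i j. (if fst sk then 1 else -1) * mat_pow d (Jmat d) (snd sk) i j)"

definition A_pmf :: "nat \<Rightarrow> real \<Rightarrow> (nat \<Rightarrow> nat \<Rightarrow> real) pmf" where
  "A_pmf d p = bind_pmf (bernoulli_pmf p)
     (\<lambda>c. if c then return_pmf (idm d)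
          else map_pmf (signed_Jpow d) (pmf_of_set (other_idx d)))"

definition first_step_pmf :: "nat \<Rightarrow> (nat \<Rightarrow> real) pmf" where
  "first_step_pmf d = pmf_of_set {(\<lambda>j. c * unit_vec i j) | c i. c \<in> {1, -1} \<and> i < d}"

definition next_step_pmf :: "nat \<Rightarrow> real \<Rightarrow> (nat \<Rightarrow> real) list \<Rightarrow> (nat \<Rightarrow> real) pmf" where
  "next_step_pmf d p xs = bind_pmf (pmf_of_set {0..<length xs})
     (\<lambda>b. map_pmf (\<lambda>A. mat_vec d A (xs ! b)) (A_pmf d p))"

fun merw_pmf :: "nat \<Rightarrow> real \<Rightarrow> nat \<Rightarrow> (nat \<Rightarrow> real) list pmf" where
  "merw_pmf d p 0 = return_pmf []"
| "merw_pmf d p (Suc 0) = map_pmf (\<lambda>x. [x]) (first_step_pmf d)"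
| "merw_pmf d p (Suc (Suc n)) = bind_pmf (merw_pmf d p (Suc n))
      (\<lambda>xs. map_pmf (\<lambda>y. xs @ [y]) (next_step_pmf d p xs))"

text \<open>A process X (X k = k-th step, k >= 1) on the probability space M is a MERW
  if for every n the law of (X_1,...,X_n) is merw_pmf d p n.\<close>
definition is_MERW :: "'a measure \<Rightarrow> nat \<Rightarrow> real \<Rightarrow> (nat \<Rightarrow> 'a \<Rightarrow> nat \<Rightarrow> real) \<Rightarrow> bool" where
  "is_MERW M d p X \<longleftrightarrow>
     (\<forall>n. (\<lambda>\<omega>. map (\<lambda>k. X k \<omega>) [1..<Suc n]) \<in> measurable M (count_space UNIV)
        \<and> distr M (count_space UNIV) (\<lambda>\<omega>. map (\<lambda>k. X k \<omega>) [1..<Suc n])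
            = measure_pmf (merw_pmf d p n))"

definition merw_pos :: "(nat \<Rightarrow> 'a \<Rightarrow> nat \<Rightarrow> real) \<Rightarrow> nat \<Rightarrow> 'a \<Rightarrow> nat \<Rightarrow> real" where
  "merw_pos X n \<omega> = (\<lambda>i. \<Sum>k\<in>{1..n}. X k \<omega> i)"

end

theory Submission
  imports Defs
begin

text \<open>
  Given the first \<open>n\<close> steps, the next step is \<open>A X\<^sub>b\<close> with \<open>b\<close> uniform, and on each coordinate
  the mean of \<open>A\<close> acts as multiplication by \<open>a = (2dp - 1)/(2d - 1)\<close>. Hence
  \<open>E[S\<^sub>n\<^sub>+\<^sub>1 | F\<^sub>n] = (1 + a/n) S\<^sub>n\<close>, and \<open>M\<^sub>n = \<Gamma>(n)/\<Gamma>(n + a) S\<^sub>n\<close> is a centred martingale.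
  Every step is a signed basis vector, and the matrices \<open>\<plusminus>J\<^sup>k\<close> preserve this, so
  \<open>E[X\<^sub>n X\<^sub>n\<^sup>T] = I/d\<close>; the recursion \<open>E|S\<^sub>n\<^sub>+\<^sub>1|\<^sup>2 = (1 + 2a/n) E|S\<^sub>n|\<^sup>2 + 1\<close> has a closed
  form in Gamma functions, and \<open>W\<^sub>n = E|M\<^sub>n|\<^sup>2\<close> increases to \<open>1/((2a - 1)\<Gamma>(2a))\<close> when \<open>a > 1/2\<close>.
  By orthogonality of martingale increments \<open>E|M\<^sub>m - M\<^sub>n|\<^sup>2 = W\<^sub>m - W\<^sub>n\<close>. Since
  \<open>\<Gamma>(n)/\<Gamma>(n + a) \<sim> n\<^sup>-\<^sup>a\<close>, \<open>M\<^sub>n\<close> converges to \<open>L\<close> almost surely, Fatou's lemma turns this into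
  \<open>E|L - M\<^sub>n|\<^sup>2 \<le> W\<^sub>\<infinity> - W\<^sub>n \<rightarrow> 0\<close>, and the first and second moments of \<open>M\<^sub>n\<close> pass to the limit.
\<close>

lemma integral_bind_pmf_finite:
  fixes f :: "'b \<Rightarrow> real"
  assumes N: "finite (set_pmf N)" and F: "\<And>x. x \<in> set_pmf N \<Longrightarrow> finite (set_pmf (F x))"
  shows "(\<integral>y. f y \<partial>measure_pmf (bind_pmf N F)) = (\<integral>x. (\<integral>y. f y \<partial>measure_pmf (F x)) \<partial>measure_pmf N)"
proof -
  define A where "A = (\<Union>x\<in>set_pmf N. set_pmf (F x))"
  have A: "finite A" unfolding A_def using N F by blast
  have "(\<integral>y. f y \<partial>measure_pmf (bind_pmf N F)) = (\<Sum>a\<in>A. f a * pmf (bind_pmf N F) a)"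
    by (rule integral_measure_pmf_real[OF A]) (auto simp: A_def)
  also have "\<dots> = (\<integral>x. (\<Sum>a\<in>A. f a * pmf (F x) a) \<partial>measure_pmf N)"
    by (simp add: pmf_bind integrable_measure_pmf_finite[OF N])
  also have "\<dots> = (\<integral>x. (\<integral>y. f y \<partial>measure_pmf (F x)) \<partial>measure_pmf N)"
    by (intro integral_cong_AE AE_pmfI integral_measure_pmf_real[OF A, symmetric])
       (auto simp: A_def)
  finally show ?thesis .
qed

lemma mod_add_right_cancel_less:
  fixes i j k d :: nat
  assumes "i < d" "j < d" "(i + k) mod d = (j + k) mod d"
  shows "i = j"
proof -
  have "int d dvd int i - int j"
    using assms(3) by (metis add_diff_cancel_right mod_eq_dvd_iff of_nat_add of_nat_mod)
  then show ?thesis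
    using assms(1,2) by (metis mod_eq_dvd_iff mod_less of_nat_eq_iff zmod_int)
qed

lemma sum_rotate_mod:
  fixes f :: "nat \<Rightarrow> real"
  assumes "i < d"
  shows "(\<Sum>k\<in>{1..<d}. f ((i + k) mod d)) = (\<Sum>l<d. f l) - f i"
proof -
  have inj: "inj_on (\<lambda>k. (i + k) mod d) {..<d}"
    by (intro inj_onI) (metis add.commute lessThan_iff mod_add_right_cancel_less)
  have "(\<lambda>k. (i + k) mod d) ` {..<d} = {..<d}"
    by (rule endo_inj_surj[OF _ _ inj]) (use assms in auto)
  then have "(\<Sum>l<d. f l) = (\<Sum>k<d. f ((i + k) mod d))"
    using sum.reindex[OF inj, of f] by simp
  also have "\<dots> = f i + (\<Sum>k\<in>{1..<d}. f ((i + k) mod d))"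
    using assms by (subst lessThan_atLeast0, subst sum.atLeast_Suc_lessThan) auto
  finally show ?thesis by simp
qed

section \<open>Gamma-function ratios\<close>

definition gamma_ratio :: "real \<Rightarrow> nat \<Rightarrow> real" where
  "gamma_ratio a n = Gamma (real n) / Gamma (real n + a)"

definition merw_variance :: "real \<Rightarrow> nat \<Rightarrow> real" where
  "merw_variance a n = (Gamma (real n + 2 * a) / (Gamma (real n) * Gamma (2 * a)) - real n) / (2 * a - 1)"

definition martingale_variance :: "real \<Rightarrow> nat \<Rightarrow> real" where
  "martingale_variance a n = (gamma_ratio a n)\<^sup>2 * merw_variance a n"

definition limit_variance :: "real \<Rightarrow> real" where
  "limit_variance a = 1 / ((2 * a - 1) * Gamma (2 * a))"

lemma Gamma_plus1_real_pos: "(x::real) > 0 \<Longrightarrow> Gamma (x + 1) = x * Gamma x"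
  by (rule Gamma_plus1) auto

lemma gamma_ratio_pos: "a > 0 \<Longrightarrow> n \<ge> 1 \<Longrightarrow> gamma_ratio a n > 0"
  by (simp add: gamma_ratio_def)

lemma gamma_ratio_Suc:
  assumes "a > 0" "n \<ge> 1"
  shows "gamma_ratio a (Suc n) = gamma_ratio a n * real n / (real n + a)"
proof -
  have "Gamma (real n + a + 1) = (real n + a) * Gamma (real n + a)"
    "Gamma (real n + 1) = real n * Gamma (real n)"
    using assms by (simp_all add: Gamma_plus1_real_pos)
  moreover have "Gamma (real n + a) > 0" using assms by simp
  ultimately show ?thesis
    using assms by (simp add: gamma_ratio_def add_ac field_simps)
qed

lemma merw_variance_1:
  assumes "a > 1/2"
  shows "merw_variance a 1 = 1"
proof -
  have "Gamma (1 + 2 * a) = 2 * a * Gamma (2 * a)"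
    using Gamma_plus1_real_pos[of "2 * a"] assms by (simp add: add.commute)
  moreover have "Gamma (2 * a) > 0" "2 * a - 1 \<noteq> 0" using assms by simp_all
  ultimately show ?thesis by (simp add: merw_variance_def)
qed

lemma merw_variance_Suc:
  assumes "a > 1/2" "n \<ge> 1"
  shows "merw_variance a (Suc n) = (1 + 2 * a / real n) * merw_variance a n + 1"
proof -
  define r where "r = Gamma (real n + 2 * a) / (Gamma (real n) * Gamma (2 * a))"
  have Gamma_Suc: "Gamma (real n + 2 * a + 1) = (real n + 2 * a) * Gamma (real n + 2 * a)"
    "Gamma (real n + 1) = real n * Gamma (real n)"
    using assms by (simp_all add: Gamma_plus1_real_pos)
  have "Gamma (real n) > 0" "Gamma (2 * a) > 0" using assms by auto
  then have "Gamma (real n + 2 * a + 1) / (Gamma (real n + 1) * Gamma (2 * a))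
      = (real n + 2 * a) / real n * r"
    unfolding Gamma_Suc r_def using assms(2) by simp
  then have "merw_variance a (Suc n) = ((real n + 2 * a) / real n * r - (real n + 1)) / (2 * a - 1)"
    by (simp add: merw_variance_def add_ac)
  moreover have "merw_variance a n = (r - real n) / (2 * a - 1)"
    by (simp add: merw_variance_def r_def)
  moreover have "2 * a - 1 \<noteq> 0" "real n \<noteq> 0" using assms by auto
  ultimately show ?thesis
    by (simp only:) (simp add: field_simps)
qed

lemma Gamma_series'_eq_gamma_ratio:
  assumes "a > 0" "n \<ge> 1"
  shows "Gamma_series' a n = gamma_ratio a n * real n powr a * Gamma a"
proof -
  have "fact (n - 1) = Gamma (real n)"
    using Gamma_fact[of "n - 1", where 'a = real] assms(2) by (simp add: of_nat_diff)
  moreover have "pochhammer a n = Gamma (a + real n) / Gamma a"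
    using assms(1) by (intro pochhammer_Gamma) auto
  moreover have "exp (a * ln (real n)) = real n powr a"
    using assms(2) by (simp add: powr_def)
  moreover have "Gamma (real n + a) > 0" "Gamma a > 0" using assms by auto
  ultimately show ?thesis
    unfolding Gamma_series'_def gamma_ratio_def by (simp only:) (simp add: add.commute field_simps)
qed

lemma gamma_ratio_asymp:
  assumes "a > 0"
  shows "(\<lambda>n. gamma_ratio a n * real n powr a) \<longlonglongrightarrow> 1"
proof -
  have Gamma_a: "Gamma a \<noteq> 0" using Gamma_real_pos[OF assms] by simp
  have "(\<lambda>n. Gamma_series' a n / Gamma a) \<longlonglongrightarrow> Gamma a / Gamma a"
    by (intro tendsto_intros Gamma_series'_LIMSEQ Gamma_a)
  moreover have "\<forall>\<^sub>F n in sequentially. Gamma_series' a n / Gamma a = gamma_ratio a n * real n powr a"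
    using eventually_ge_at_top[of 1]
    by eventually_elim (use assms Gamma_a in \<open>simp add: Gamma_series'_eq_gamma_ratio\<close>)
  ultimately show ?thesis
    using Gamma_a by (simp add: tendsto_cong)
qed

lemma martingale_variance_limit:
  assumes "a > 1/2"
  shows "martingale_variance a \<longlonglongrightarrow> limit_variance a"
proof -
  define u where "u n = gamma_ratio a n * real n powr a" for n
  define v where "v n = gamma_ratio (2 * a) n * real n powr (2 * a)" for n
  have "\<forall>\<^sub>F n in sequentially. ((u n)\<^sup>2 / (v n * Gamma (2 * a)) - (u n)\<^sup>2 * real n powr (1 - 2 * a))
      / (2 * a - 1) = martingale_variance a n"
    using eventually_ge_at_top[of 1]
  proof eventually_elim
    case (elim n)
    define P where "P = real n powr (2 * a)"
    have "(real n powr a)\<^sup>2 = P"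
      using elim by (simp add: P_def power2_eq_square powr_add[symmetric])
    moreover have "real n powr (1 - 2 * a) = real n / P"
      using elim by (simp add: P_def powr_diff)
    moreover have "Gamma (real n) > 0" "Gamma (real n + 2 * a) > 0" "Gamma (2 * a) > 0"
      "Gamma (a + real n) > 0" "P > 0" "2 * a - 1 \<noteq> 0"
      using assms elim by (auto simp: P_def)
    ultimately show ?case
      unfolding u_def v_def martingale_variance_def merw_variance_def power_mult_distrib
        P_def[symmetric]
      by (simp only:) (simp add: gamma_ratio_def field_simps)
  qed
  moreover have "(\<lambda>n. ((u n)\<^sup>2 / (v n * Gamma (2 * a)) - (u n)\<^sup>2 * real n powr (1 - 2 * a)) / (2 * a - 1))
      \<longlonglongrightarrow> (1\<^sup>2 / (1 * Gamma (2 * a)) - 1\<^sup>2 * 0) / (2 * a - 1)"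
    using assms unfolding u_def v_def
    by (intro tendsto_intros gamma_ratio_asymp tendsto_neg_powr filterlim_real_sequentially)
       (auto simp: Gamma_real_pos less_imp_neq[symmetric])
  ultimately show ?thesis
    by (simp add: tendsto_cong limit_variance_def mult.commute)
qed

section \<open>Convergence in mean square\<close>

lemma integrable_mult_of_square_integrable:
  fixes f g :: "'a \<Rightarrow> real"
  assumes "f \<in> borel_measurable M" "g \<in> borel_measurable M"
    and "integrable M (\<lambda>x. (f x)\<^sup>2)" "integrable M (\<lambda>x. (g x)\<^sup>2)"
  shows "integrable M (\<lambda>x. f x * g x)"
proof (rule Bochner_Integration.integrable_bound)
  show "integrable M (\<lambda>x. (f x)\<^sup>2 + (g x)\<^sup>2)" using assms by simp
  show "AE x in M. norm (f x * g x) \<le> norm ((f x)\<^sup>2 + (g x)\<^sup>2)"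
  proof (intro AE_I2)
    fix x
    have "0 \<le> (\<bar>f x\<bar> - \<bar>g x\<bar>)\<^sup>2" by simp
    then have "2 * (\<bar>f x\<bar> * \<bar>g x\<bar>) \<le> (f x)\<^sup>2 + (g x)\<^sup>2"
      by (simp add: power2_eq_square algebra_simps)
    then have "\<bar>f x\<bar> * \<bar>g x\<bar> \<le> (f x)\<^sup>2 + (g x)\<^sup>2"
      using mult_nonneg_nonneg[OF abs_ge_zero abs_ge_zero, of "f x" "g x"] by linarith
    then show "norm (f x * g x) \<le> norm ((f x)\<^sup>2 + (g x)\<^sup>2)"
      by (simp add: abs_mult)
  qed
qed (use assms in simp)

lemma Cauchy_Schwarz_integral:
  fixes u v :: "'a \<Rightarrow> real"
  assumes [measurable]: "u \<in> borel_measurable M" "v \<in> borel_measurable M"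
    and "integrable M (\<lambda>x. (u x)\<^sup>2)" "integrable M (\<lambda>x. (v x)\<^sup>2)"
  shows "(\<integral>x. u x * v x \<partial>M)\<^sup>2 \<le> (\<integral>x. (u x)\<^sup>2 \<partial>M) * (\<integral>x. (v x)\<^sup>2 \<partial>M)"
proof -
  have uv: "integrable M (\<lambda>x. \<bar>u x\<bar> * \<bar>v x\<bar>)"
    using integrable_mult_of_square_integrable[OF assms] by (simp add: abs_mult[symmetric])
  have "ennreal (\<integral>x. \<bar>u x\<bar> * \<bar>v x\<bar> \<partial>M) = (\<integral>\<^sup>+x. ennreal \<bar>u x\<bar> * ennreal \<bar>v x\<bar> \<partial>M)"
    using uv by (subst nn_integral_eq_integral[symmetric]) (auto simp: ennreal_mult)
  moreover have "0 \<le> (\<integral>x. \<bar>u x\<bar> * \<bar>v x\<bar> \<partial>M)" by simp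
  ultimately have "ennreal ((\<integral>x. \<bar>u x\<bar> * \<bar>v x\<bar> \<partial>M)\<^sup>2) = (\<integral>\<^sup>+x. ennreal \<bar>u x\<bar> * ennreal \<bar>v x\<bar> \<partial>M)\<^sup>2"
    by (metis ennreal_power)
  also have "\<dots> \<le> (\<integral>\<^sup>+x. ennreal \<bar>u x\<bar> ^ 2 \<partial>M) * (\<integral>\<^sup>+x. ennreal \<bar>v x\<bar> ^ 2 \<partial>M)"
    by (rule Cauchy_Schwarz_nn_integral) measurable
  also have "\<dots> = ennreal (\<integral>x. (u x)\<^sup>2 \<partial>M) * ennreal (\<integral>x. (v x)\<^sup>2 \<partial>M)"
    using assms(3,4) by (simp add: ennreal_power nn_integral_eq_integral)
  also have "\<dots> = ennreal ((\<integral>x. (u x)\<^sup>2 \<partial>M) * (\<integral>x. (v x)\<^sup>2 \<partial>M))"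
    by (rule ennreal_mult[symmetric]) simp_all
  finally have "(\<integral>x. \<bar>u x\<bar> * \<bar>v x\<bar> \<partial>M)\<^sup>2 \<le> (\<integral>x. (u x)\<^sup>2 \<partial>M) * (\<integral>x. (v x)\<^sup>2 \<partial>M)"
    by (subst (asm) ennreal_le_iff) auto
  moreover have "\<bar>\<integral>x. u x * v x \<partial>M\<bar> \<le> (\<integral>x. \<bar>u x\<bar> * \<bar>v x\<bar> \<partial>M)"
    using integral_abs_bound[of M "\<lambda>x. u x * v x"] by (simp only: abs_mult)
  ultimately show ?thesis
    using power_mono[of "\<bar>\<integral>x. u x * v x \<partial>M\<bar>" "\<integral>x. \<bar>u x\<bar> * \<bar>v x\<bar> \<partial>M" 2]
    by simp
qed

lemma power2_le_twice_diff_plus_twice: "(x::real)\<^sup>2 \<le> 2 * (x - y)\<^sup>2 + 2 * y\<^sup>2"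
proof -
  have "0 \<le> (x - 2 * y)\<^sup>2" by simp
  then show ?thesis by (simp add: power2_eq_square algebra_simps)
qed

lemma integrable_square_diff:
  fixes f g :: "'a \<Rightarrow> real"
  assumes "f \<in> borel_measurable M" "g \<in> borel_measurable M"
    and "integrable M (\<lambda>x. (f x)\<^sup>2)" "integrable M (\<lambda>x. (g x)\<^sup>2)"
  shows "integrable M (\<lambda>x. (f x - g x)\<^sup>2)"
  using integrable_mult_of_square_integrable[OF assms] assms(3,4)
  by (simp add: power2_diff mult.assoc)

lemma integrable_square_of_square_diff:
  fixes f g :: "'a \<Rightarrow> real"
  assumes "f \<in> borel_measurable M"
    and "integrable M (\<lambda>x. (f x - g x)\<^sup>2)" "integrable M (\<lambda>x. (g x)\<^sup>2)"
  shows "integrable M (\<lambda>x. (f x)\<^sup>2)"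
proof (rule Bochner_Integration.integrable_bound)
  show "integrable M (\<lambda>x. 2 * (f x - g x)\<^sup>2 + 2 * (g x)\<^sup>2)"
    using assms by simp
  show "AE x in M. norm ((f x)\<^sup>2) \<le> norm (2 * (f x - g x)\<^sup>2 + 2 * (g x)\<^sup>2)"
    using power2_le_twice_diff_plus_twice by simp
qed (use assms in simp)

lemma integral_mult_tendsto_zero:
  fixes u v :: "nat \<Rightarrow> 'a \<Rightarrow> real"
  assumes "\<And>n. u n \<in> borel_measurable M" "\<And>n. v n \<in> borel_measurable M"
    and "\<And>n. integrable M (\<lambda>x. (u n x)\<^sup>2)" "\<And>n. integrable M (\<lambda>x. (v n x)\<^sup>2)"
    and u: "(\<lambda>n. \<integral>x. (u n x)\<^sup>2 \<partial>M) \<longlonglongrightarrow> 0"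
    and v: "\<And>n. (\<integral>x. (v n x)\<^sup>2 \<partial>M) \<le> C"
  shows "(\<lambda>n. \<integral>x. u n x * v n x \<partial>M) \<longlonglongrightarrow> 0"
proof (rule Lim_null_comparison)
  show "\<forall>\<^sub>F n in sequentially. norm (\<integral>x. u n x * v n x \<partial>M) \<le> sqrt ((\<integral>x. (u n x)\<^sup>2 \<partial>M) * C)"
  proof (intro always_eventually allI)
    fix n
    have "norm (\<integral>x. u n x * v n x \<partial>M) = sqrt ((\<integral>x. u n x * v n x \<partial>M)\<^sup>2)"
      by simp
    also have "\<dots> \<le> sqrt ((\<integral>x. (u n x)\<^sup>2 \<partial>M) * (\<integral>x. (v n x)\<^sup>2 \<partial>M))"
      using assms by (intro real_sqrt_le_mono Cauchy_Schwarz_integral)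
    also have "\<dots> \<le> sqrt ((\<integral>x. (u n x)\<^sup>2 \<partial>M) * C)"
      using v by (intro real_sqrt_le_mono mult_left_mono) simp_all
    finally show "norm (\<integral>x. u n x * v n x \<partial>M) \<le> sqrt ((\<integral>x. (u n x)\<^sup>2 \<partial>M) * C)" .
  qed
  show "(\<lambda>n. sqrt ((\<integral>x. (u n x)\<^sup>2 \<partial>M) * C)) \<longlonglongrightarrow> 0"
    using tendsto_real_sqrt[OF tendsto_mult_right[OF u, of C]] by simp
qed

lemma integral_square_bounded_of_L2_convergent:
  fixes g :: "nat \<Rightarrow> 'a \<Rightarrow> real" and G :: "'a \<Rightarrow> real"
  assumes [measurable]: "\<And>n. g n \<in> borel_measurable M" "G \<in> borel_measurable M"
    and int: "\<And>n. integrable M (\<lambda>x. (g n x)\<^sup>2)" "integrable M (\<lambda>x. (G x)\<^sup>2)"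
    and lim: "(\<lambda>n. \<integral>x. (g n x - G x)\<^sup>2 \<partial>M) \<longlonglongrightarrow> c"
  obtains C where "\<And>n. (\<integral>x. (g n x)\<^sup>2 \<partial>M) \<le> C"
proof -
  obtain K where K: "\<And>n. norm (\<integral>x. (g n x - G x)\<^sup>2 \<partial>M) \<le> K"
    using BseqE[OF convergent_imp_Bseq[OF convergentI[OF lim]]] by blast
  have "(\<integral>x. (g n x)\<^sup>2 \<partial>M) \<le> 2 * K + 2 * (\<integral>x. (G x)\<^sup>2 \<partial>M)" for n
  proof -
    have diff: "integrable M (\<lambda>x. (g n x - G x)\<^sup>2)"
      using int by (simp add: integrable_square_diff)
    have "(\<integral>x. (g n x)\<^sup>2 \<partial>M) \<le> (\<integral>x. 2 * (g n x - G x)\<^sup>2 + 2 * (G x)\<^sup>2 \<partial>M)"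
      using int diff by (intro integral_mono power2_le_twice_diff_plus_twice) simp_all
    also have "\<dots> = 2 * (\<integral>x. (g n x - G x)\<^sup>2 \<partial>M) + 2 * (\<integral>x. (G x)\<^sup>2 \<partial>M)"
      using int diff by simp
    finally show ?thesis
      using abs_le_D1[OF K[of n, unfolded real_norm_def]] by linarith
  qed
  then show ?thesis by (rule that)
qed

lemma integral_mult_tendsto_of_L2:
  fixes f g :: "nat \<Rightarrow> 'a \<Rightarrow> real" and F G :: "'a \<Rightarrow> real"
  assumes [measurable]: "\<And>n. f n \<in> borel_measurable M" "\<And>n. g n \<in> borel_measurable M"
      "F \<in> borel_measurable M" "G \<in> borel_measurable M"
    and int: "\<And>n. integrable M (\<lambda>x. (f n x)\<^sup>2)" "\<And>n. integrable M (\<lambda>x. (g n x)\<^sup>2)"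
      "integrable M (\<lambda>x. (F x)\<^sup>2)" "integrable M (\<lambda>x. (G x)\<^sup>2)"
    and f_lim: "(\<lambda>n. \<integral>x. (f n x - F x)\<^sup>2 \<partial>M) \<longlonglongrightarrow> 0"
    and g_lim: "(\<lambda>n. \<integral>x. (g n x - G x)\<^sup>2 \<partial>M) \<longlonglongrightarrow> 0"
  shows "(\<lambda>n. \<integral>x. f n x * g n x \<partial>M) \<longlonglongrightarrow> (\<integral>x. F x * G x \<partial>M)"
proof -
  have diff: "integrable M (\<lambda>x. (f n x - F x)\<^sup>2)" "integrable M (\<lambda>x. (g n x - G x)\<^sup>2)" for n
    using int by (simp_all add: integrable_square_diff)
  obtain C where C: "\<And>n. (\<integral>x. (g n x)\<^sup>2 \<partial>M) \<le> C"
    using integral_square_bounded_of_L2_convergent[OF _ _ int(2,4) g_lim] by auto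
  have "(\<lambda>n. \<integral>x. (f n x - F x) * g n x \<partial>M) \<longlonglongrightarrow> 0"
    using diff int f_lim C by (intro integral_mult_tendsto_zero) simp_all
  moreover have "(\<lambda>n. \<integral>x. (g n x - G x) * F x \<partial>M) \<longlonglongrightarrow> 0"
    using diff int g_lim by (intro integral_mult_tendsto_zero[where C = "\<integral>x. (F x)\<^sup>2 \<partial>M"]) simp_all
  ultimately have "(\<lambda>n. (\<integral>x. F x * G x \<partial>M) + (\<integral>x. (f n x - F x) * g n x \<partial>M)
      + (\<integral>x. (g n x - G x) * F x \<partial>M)) \<longlonglongrightarrow> (\<integral>x. F x * G x \<partial>M) + 0 + 0"
    by (intro tendsto_add tendsto_const)
  moreover have "(\<integral>x. F x * G x \<partial>M) + (\<integral>x. (f n x - F x) * g n x \<partial>M)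
      + (\<integral>x. (g n x - G x) * F x \<partial>M) = (\<integral>x. f n x * g n x \<partial>M)" for n
  proof -
    have "integrable M (\<lambda>x. F x * G x)" "integrable M (\<lambda>x. (f n x - F x) * g n x)"
      "integrable M (\<lambda>x. (g n x - G x) * F x)"
      using int diff by (simp_all add: integrable_mult_of_square_integrable)
    then have "(\<integral>x. F x * G x \<partial>M) + (\<integral>x. (f n x - F x) * g n x \<partial>M)
        + (\<integral>x. (g n x - G x) * F x \<partial>M)
        = (\<integral>x. F x * G x + (f n x - F x) * g n x + (g n x - G x) * F x \<partial>M)"
      by simp
    then show ?thesis by (simp add: algebra_simps)
  qed
  ultimately show ?thesis by simp
qed

lemma integral_square_diff_limit_le:
  fixes f :: "nat \<Rightarrow> 'a \<Rightarrow> real" and F g :: "'a \<Rightarrow> real"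
  assumes [measurable]: "\<And>n. f n \<in> borel_measurable M" "F \<in> borel_measurable M" "g \<in> borel_measurable M"
    and conv: "AE x in M. (\<lambda>n. f n x) \<longlonglongrightarrow> F x"
    and int: "\<And>n. integrable M (\<lambda>x. (f n x - g x)\<^sup>2)"
    and lim: "(\<lambda>n. \<integral>x. (f n x - g x)\<^sup>2 \<partial>M) \<longlonglongrightarrow> c"
  shows "integrable M (\<lambda>x. (F x - g x)\<^sup>2)" "(\<integral>x. (F x - g x)\<^sup>2 \<partial>M) \<le> c"
proof -
  have c: "c \<ge> 0"
    using lim by (rule LIMSEQ_le_const) simp
  have "(\<lambda>n. \<integral>\<^sup>+x. ennreal ((f n x - g x)\<^sup>2) \<partial>M) \<longlonglongrightarrow> ennreal c"
    using int lim by (simp add: nn_integral_eq_integral tendsto_ennrealI)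
  then have liminf: "liminf (\<lambda>n. \<integral>\<^sup>+x. ennreal ((f n x - g x)\<^sup>2) \<partial>M) = ennreal c"
    by (intro lim_imp_Liminf) simp
  have "AE x in M. liminf (\<lambda>n. ennreal ((f n x - g x)\<^sup>2)) = ennreal ((F x - g x)\<^sup>2)"
    using conv by eventually_elim (intro lim_imp_Liminf tendsto_ennrealI tendsto_intros; simp)
  then have "(\<integral>\<^sup>+x. ennreal ((F x - g x)\<^sup>2) \<partial>M)
      = (\<integral>\<^sup>+x. liminf (\<lambda>n. ennreal ((f n x - g x)\<^sup>2)) \<partial>M)"
    by (intro nn_integral_cong_AE) (auto elim!: AE_mp)
  also have "\<dots> \<le> ennreal c"
    using nn_integral_liminf[of "\<lambda>n x. ennreal ((f n x - g x)\<^sup>2)" M] liminf by simp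
  finally have bound: "(\<integral>\<^sup>+x. ennreal ((F x - g x)\<^sup>2) \<partial>M) \<le> ennreal c" .
  show int_F: "integrable M (\<lambda>x. (F x - g x)\<^sup>2)"
    using bound by (intro integrableI_nonneg) (auto simp: top.not_eq_extremum le_less_trans)
  show "(\<integral>x. (F x - g x)\<^sup>2 \<partial>M) \<le> c"
    using bound c by (simp add: nn_integral_eq_integral[OF int_F] ennreal_le_iff)
qed

section \<open>The law of one step\<close>

lemma mat_pow_Jmat:
  assumes "d \<ge> 1"
  shows "mat_pow d (Jmat d) k i j = (if i < d \<and> j < d \<and> j = (i + k) mod d then 1 else 0)"
proof (induction k arbitrary: j)
  case 0
  show ?case by (auto simp: idm_def)
next
  case (Suc k)
  have J: "Jmat d l j = (if l < d \<and> j < d \<and> j = Suc l mod d then 1 else 0)" for l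
    by (simp add: Jmat_def)
  have "mat_pow d (Jmat d) (Suc k) i j
      = (\<Sum>l<d. if l = (i + k) mod d then (if i < d \<and> j < d \<and> j = Suc l mod d then 1 else 0) else 0)"
    unfolding mat_pow.simps mat_mul_def by (intro sum.cong) (auto simp: Suc.IH J)
  also have "\<dots> = (if i < d \<and> j < d \<and> j = (i + Suc k) mod d then 1 else 0)"
    using assms by (auto simp: mod_Suc_eq)
  finally show ?case .
qed

lemma mat_vec_idm: "mat_vec d (idm d) x i = (if i < d then x i else 0)"
proof -
  have "mat_vec d (idm d) x i = (\<Sum>j<d. if j = i then (if i < d then x j else 0) else 0)"
    unfolding mat_vec_def idm_def by (intro sum.cong) auto
  then show ?thesis by simp
qed

lemma mat_vec_signed_Jpow:
  assumes "d \<ge> 1"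
  shows "mat_vec d (signed_Jpow d sk) x i
    = (if fst sk then 1 else -1) * (if i < d then x ((i + snd sk) mod d) else 0)"
proof -
  have "mat_vec d (mat_pow d (Jmat d) k) x i
      = (\<Sum>j<d. if j = (i + k) mod d then (if i < d then x j else 0) else 0)" for k
    unfolding mat_vec_def using assms by (intro sum.cong) (auto simp: mat_pow_Jmat)
  then have "mat_vec d (mat_pow d (Jmat d) k) x i = (if i < d then x ((i + k) mod d) else 0)" for k
    using assms by simp
  then show ?thesis
    unfolding signed_Jpow_def mat_vec_def by (simp add: sum_distrib_left sum_negf mult.assoc)
qed

lemma other_idx_eq: "other_idx d = insert (False, 0) (Pair True ` {1..<d} \<union> Pair False ` {1..<d})"
  unfolding other_idx_def by auto

lemma finite_other_idx: "finite (other_idx d)"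
  and other_idx_nonempty: "other_idx d \<noteq> {}"
  unfolding other_idx_eq by auto

lemma sum_other_idx:
  "(\<Sum>sk\<in>other_idx d. f sk) = f (False, 0) + (\<Sum>k\<in>{1..<d}. f (True, k) + f (False, k))"
  unfolding other_idx_eq
  by (subst sum.insert, simp, force, subst sum.union_disjoint)
     (auto simp: sum.reindex inj_on_def sum.distrib)

lemma card_other_idx: "d \<ge> 1 \<Longrightarrow> card (other_idx d) = 2 * d - 1"
  using sum_other_idx[of "\<lambda>_. 1::nat" d] by simp

definition merw_exponent :: "nat \<Rightarrow> real \<Rightarrow> real" where
  "merw_exponent d p = (2 * real d * p - 1) / (2 * real d - 1)"

text \<open>All steps of the walk are axial, which makes their off-diagonal second moments vanish.\<close>

definition axial :: "(nat \<Rightarrow> real) \<Rightarrow> bool" where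
  "axial x \<longleftrightarrow> (\<forall>i j. i \<noteq> j \<longrightarrow> x i * x j = 0)"

definition axis_units :: "nat \<Rightarrow> (nat \<Rightarrow> real) set" where
  "axis_units d = (\<lambda>(c, m) j. c * unit_vec m j) ` ({1, -1} \<times> {..<d})"

definition steps_sum :: "(nat \<Rightarrow> real) list \<Rightarrow> nat \<Rightarrow> real" where
  "steps_sum xs i = sum_list (map (\<lambda>x. x i) xs)"

lemma steps_sum_conv_nth: "steps_sum xs i = (\<Sum>b<length xs. (xs ! b) i)"
  unfolding steps_sum_def by (simp add: sum_list_sum_nth atLeast0LessThan)

lemma steps_sum_snoc [simp]: "steps_sum (xs @ [y]) i = steps_sum xs i + y i"
  unfolding steps_sum_def by simp

lemma inj_on_axis_unit: "inj_on (\<lambda>(c, m) j. c * unit_vec m j :: real) ({1, -1} \<times> {..<d})"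
proof (rule inj_onI, clarify)
  fix c c' :: real and m m' :: nat
  assume c: "c \<in> {1, -1}" "c' \<in> {1, -1}" and eq: "(\<lambda>j. c * unit_vec m j) = (\<lambda>j. c' * unit_vec m' j)"
  from fun_cong[OF eq, of m] have "c = c' * unit_vec m' m" by (simp add: unit_vec_def)
  with c show "c = c' \<and> m = m'" by (auto simp: unit_vec_def split: if_splits)
qed

lemma finite_axis_units: "finite (axis_units d)"
  and axis_units_nonempty: "d \<ge> 1 \<Longrightarrow> axis_units d \<noteq> {}"
  unfolding axis_units_def by (auto simp: lessThan_empty_iff)

lemma card_axis_units: "card (axis_units d) = 2 * d"
  unfolding axis_units_def by (simp add: card_image[OF inj_on_axis_unit] card_cartesian_product)

lemma sum_axis_units:
  "(\<Sum>x\<in>axis_units d. f x) = (\<Sum>c\<in>{1, -1::real}. \<Sum>m<d. f (\<lambda>j. c * unit_vec m j))"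
  unfolding axis_units_def
  by (subst sum.reindex[OF inj_on_axis_unit]) (simp add: sum.cartesian_product case_prod_unfold)

lemma axial_axis_units: "x \<in> axis_units d \<Longrightarrow> axial x"
  unfolding axis_units_def axial_def unit_vec_def by auto

lemma first_step_pmf_eq: "first_step_pmf d = pmf_of_set (axis_units d)"
  unfolding first_step_pmf_def axis_units_def by (rule arg_cong[where f = pmf_of_set]) auto

lemma finite_set_pmf_bernoulli: "finite (set_pmf (bernoulli_pmf q))"
  by (rule finite_subset[of _ UNIV]) auto

lemma set_pmf_A_pmf: "set_pmf (A_pmf d p) \<subseteq> insert (idm d) (signed_Jpow d ` other_idx d)"
  unfolding A_pmf_def
  by (auto simp: set_pmf_of_set[OF other_idx_nonempty finite_other_idx] split: if_splits)

lemma finite_set_pmf_A_pmf: "finite (set_pmf (A_pmf d p))"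
  by (rule finite_subset[OF set_pmf_A_pmf]) (simp add: finite_other_idx)

lemma set_pmf_next_step_pmf:
  assumes "xs \<noteq> []"
  shows "set_pmf (next_step_pmf d p xs)
    = (\<Union>b\<in>{0..<length xs}. (\<lambda>A. mat_vec d A (xs ! b)) ` set_pmf (A_pmf d p))"
  using assms unfolding next_step_pmf_def by (simp add: set_pmf_of_set)

lemma finite_set_pmf_next_step_pmf: "xs \<noteq> [] \<Longrightarrow> finite (set_pmf (next_step_pmf d p xs))"
  by (simp add: set_pmf_next_step_pmf finite_set_pmf_A_pmf)

lemma integral_next_step_pmf:
  assumes "xs \<noteq> []"
  shows "(\<integral>y. f y \<partial>measure_pmf (next_step_pmf d p xs))
    = (\<Sum>b<length xs. \<integral>A. f (mat_vec d A (xs ! b)) \<partial>measure_pmf (A_pmf d p)) / real (length xs)"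
proof -
  have "(\<integral>y. f y \<partial>measure_pmf (next_step_pmf d p xs))
      = (\<integral>b. (\<integral>A. f (mat_vec d A (xs ! b)) \<partial>measure_pmf (A_pmf d p)) \<partial>measure_pmf (pmf_of_set {0..<length xs}))"
    unfolding next_step_pmf_def using assms
    by (subst integral_bind_pmf_finite) (auto simp: set_pmf_of_set finite_set_pmf_A_pmf)
  then show ?thesis
    using assms by (simp add: integral_pmf_of_set atLeast0LessThan lessThan_empty_iff)
qed

locale merw_params =
  fixes d :: nat and p :: real
  assumes d_ge_1: "d \<ge> 1" and p_nonneg: "0 \<le> p" and p_le_1: "p \<le> 1"
begin

lemma integral_A_pmf:
  "(\<integral>A. f A \<partial>measure_pmf (A_pmf d p))
    = p * f (idm d) + (1 - p) * (\<Sum>sk\<in>other_idx d. f (signed_Jpow d sk)) / (2 * real d - 1)"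
proof -
  have "(\<integral>A. f A \<partial>measure_pmf (A_pmf d p))
      = p * f (idm d) + (1 - p) * (\<Sum>sk\<in>other_idx d. f (signed_Jpow d sk)) / real (card (other_idx d))"
    unfolding A_pmf_def using p_nonneg p_le_1
    by (subst integral_bind_pmf_finite)
       (auto simp: finite_set_pmf_bernoulli set_pmf_of_set[OF other_idx_nonempty finite_other_idx]
          finite_other_idx integral_bernoulli_pmf integral_pmf_of_set[OF other_idx_nonempty finite_other_idx]
          mult.commute)
  then show ?thesis
    using d_ge_1 by (simp add: card_other_idx of_nat_diff)
qed

lemma integral_A_pmf_coord:
  assumes "i < d"
  shows "(\<integral>A. mat_vec d A x i \<partial>measure_pmf (A_pmf d p)) = merw_exponent d p * x i"
proof -
  have "(\<Sum>sk\<in>other_idx d. mat_vec d (signed_Jpow d sk) x i) = - x i"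
    using assms d_ge_1 by (simp add: sum_other_idx mat_vec_signed_Jpow)
  moreover have "2 * real d - 1 > 0" using d_ge_1 by simp
  ultimately show ?thesis
    using assms by (simp add: integral_A_pmf mat_vec_idm merw_exponent_def field_simps)
qed

lemma integral_A_pmf_coord_sq:
  assumes "i < d"
  shows "(\<integral>A. (mat_vec d A x i)\<^sup>2 \<partial>measure_pmf (A_pmf d p))
    = p * (x i)\<^sup>2 + (1 - p) / (2 * real d - 1) * (2 * (\<Sum>l<d. (x l)\<^sup>2) - (x i)\<^sup>2)"
proof -
  have "(\<Sum>sk\<in>other_idx d. (mat_vec d (signed_Jpow d sk) x i)\<^sup>2)
      = (x i)\<^sup>2 + 2 * (\<Sum>k\<in>{1..<d}. (x ((i + k) mod d))\<^sup>2)"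
    using assms d_ge_1 by (simp add: sum_other_idx mat_vec_signed_Jpow sum_distrib_left)
  also have "\<dots> = 2 * (\<Sum>l<d. (x l)\<^sup>2) - (x i)\<^sup>2"
    using sum_rotate_mod[OF assms, of "\<lambda>l. (x l)\<^sup>2"] by simp
  finally show ?thesis
    using assms by (simp add: integral_A_pmf mat_vec_idm)
qed

lemma signed_Jpow_preserves_orthogonality:
  assumes "axial x" "i \<noteq> j"
  shows "mat_vec d (signed_Jpow d sk) x i * mat_vec d (signed_Jpow d sk) x j = 0"
proof (cases "i < d \<and> j < d")
  case True
  then have "(i + snd sk) mod d \<noteq> (j + snd sk) mod d"
    using assms(2) mod_add_right_cancel_less by blast
  then show ?thesis
    using True assms(1) d_ge_1 by (simp add: mat_vec_signed_Jpow axial_def)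
qed (use d_ge_1 in \<open>auto simp: mat_vec_signed_Jpow\<close>)

lemma axial_mat_vec_A_pmf:
  assumes "axial x" "A \<in> set_pmf (A_pmf d p)"
  shows "axial (mat_vec d A x)"
  unfolding axial_def
proof (intro allI impI)
  fix i j :: nat
  assume "i \<noteq> j"
  from assms(2) set_pmf_A_pmf consider "A = idm d" | sk where "A = signed_Jpow d sk"
    by blast
  then show "mat_vec d A x i * mat_vec d A x j = 0"
  proof cases
    case 1
    then show ?thesis using assms(1) \<open>i \<noteq> j\<close> by (simp add: mat_vec_idm axial_def)
  next
    case 2
    then show ?thesis using signed_Jpow_preserves_orthogonality[OF assms(1) \<open>i \<noteq> j\<close>] by simp
  qed
qed

lemma integral_A_pmf_coord_mult:
  assumes "axial x" "i \<noteq> j"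
  shows "(\<integral>A. mat_vec d A x i * mat_vec d A x j \<partial>measure_pmf (A_pmf d p)) = 0"
proof -
  have "(\<Sum>sk\<in>other_idx d. mat_vec d (signed_Jpow d sk) x i * mat_vec d (signed_Jpow d sk) x j) = 0"
    using assms by (intro sum.neutral ballI signed_Jpow_preserves_orthogonality)
  moreover have "x i * x j = 0"
    using assms by (simp add: axial_def)
  ultimately show ?thesis
    by (simp add: integral_A_pmf mat_vec_idm)
qed

lemma integral_first_step_pmf_coord: "(\<integral>x. x i \<partial>measure_pmf (first_step_pmf d)) = 0"
  using d_ge_1
  by (simp add: first_step_pmf_eq integral_pmf_of_set finite_axis_units axis_units_nonempty
      sum_axis_units sum_negf)

lemma integral_first_step_pmf_coord_mult:
  assumes "i < d" "j < d"
  shows "(\<integral>x. x i * x j \<partial>measure_pmf (first_step_pmf d)) = (if i = j then 1 / real d else 0)"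
proof -
  have "(\<Sum>m<d. unit_vec m i * unit_vec m j) = (\<Sum>m<d. if m = i then (if i = j then 1 else 0) else 0)"
    by (intro sum.cong) (auto simp: unit_vec_def)
  then have "(\<Sum>m<d. unit_vec m i * unit_vec m j) = (if i = j then 1 else 0)"
    using assms by simp
  then show ?thesis
    using d_ge_1 by (simp add: first_step_pmf_eq integral_pmf_of_set finite_axis_units
        axis_units_nonempty sum_axis_units card_axis_units)
qed

lemma integral_next_step_pmf_coord:
  assumes "xs \<noteq> []" "i < d"
  shows "(\<integral>y. y i \<partial>measure_pmf (next_step_pmf d p xs))
    = merw_exponent d p / real (length xs) * steps_sum xs i"
  using assms
  by (simp add: integral_next_step_pmf integral_A_pmf_coord steps_sum_conv_nth sum_distrib_left
      sum_divide_distrib)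

lemma integral_next_step_pmf_coord_sq:
  assumes "xs \<noteq> []" "i < d"
  shows "(\<integral>y. (y i)\<^sup>2 \<partial>measure_pmf (next_step_pmf d p xs)) =
     (\<Sum>b<length xs. p * ((xs ! b) i)\<^sup>2
        + (1 - p) / (2 * real d - 1) * (2 * (\<Sum>l<d. ((xs ! b) l)\<^sup>2) - ((xs ! b) i)\<^sup>2))
     / real (length xs)"
  using assms by (simp add: integral_next_step_pmf integral_A_pmf_coord_sq)

lemma integral_next_step_pmf_coord_mult:
  assumes "xs \<noteq> []" "\<forall>x\<in>set xs. axial x" "i \<noteq> j"
  shows "(\<integral>y. y i * y j \<partial>measure_pmf (next_step_pmf d p xs)) = 0"
  using assms by (simp add: integral_next_step_pmf integral_A_pmf_coord_mult)

section \<open>Moments of the walk\<close>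

lemma merw_pmf_support:
  "finite (set_pmf (merw_pmf d p n))
    \<and> (\<forall>xs\<in>set_pmf (merw_pmf d p n). length xs = n \<and> (\<forall>x\<in>set xs. axial x))"
proof (induction n rule: induct_nat_012)
  case 0
  show ?case by simp
next
  case 1
  show ?case
    using d_ge_1 axial_axis_units
    by (auto simp: first_step_pmf_eq set_pmf_of_set finite_axis_units axis_units_nonempty)
next
  case (ge2 n)
  have "length xs = Suc (Suc n) \<and> (\<forall>x\<in>set xs. axial x)"
    if "xs \<in> set_pmf (merw_pmf d p (Suc (Suc n)))" for xs
  proof -
    from that obtain ys y where ys: "ys \<in> set_pmf (merw_pmf d p (Suc n))"
      and y: "y \<in> set_pmf (next_step_pmf d p ys)" and xs: "xs = ys @ [y]"
      by auto
    have len: "length ys = Suc n" and axial_ys: "\<forall>x\<in>set ys. axial x"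
      using ge2.IH(2) ys by auto
    then obtain b A where "b < length ys" "A \<in> set_pmf (A_pmf d p)" "y = mat_vec d A (ys ! b)"
      using y by (subst (asm) set_pmf_next_step_pmf) auto
    then have "axial y"
      using axial_ys by (auto intro!: axial_mat_vec_A_pmf)
    then show ?thesis
      using xs len axial_ys by auto
  qed
  moreover have "finite (set_pmf (merw_pmf d p (Suc (Suc n))))"
  proof -
    have "ys \<noteq> []" if "ys \<in> set_pmf (merw_pmf d p (Suc n))" for ys
      using ge2.IH(2) that by force
    then show ?thesis
      using ge2.IH(2) by (auto intro!: finite_imageI finite_set_pmf_next_step_pmf)
  qed
  ultimately show ?case by blast
qed

lemma finite_set_pmf_merw_pmf: "finite (set_pmf (merw_pmf d p n))"
  and length_merw_pmf: "xs \<in> set_pmf (merw_pmf d p n) \<Longrightarrow> length xs = n"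
  and axial_merw_pmf: "xs \<in> set_pmf (merw_pmf d p n) \<Longrightarrow> x \<in> set xs \<Longrightarrow> axial x"
  using merw_pmf_support by blast+

lemma integrable_merw_pmf [simp]: "integrable (measure_pmf (merw_pmf d p n)) (f :: _ \<Rightarrow> real)"
  by (rule integrable_measure_pmf_finite[OF finite_set_pmf_merw_pmf])

lemma integrable_next_step_pmf [simp]:
  "xs \<noteq> [] \<Longrightarrow> integrable (measure_pmf (next_step_pmf d p xs)) (f :: _ \<Rightarrow> real)"
  by (rule integrable_measure_pmf_finite[OF finite_set_pmf_next_step_pmf])

lemma integral_merw_pmf_Suc:
  fixes g h :: "(nat \<Rightarrow> real) list \<Rightarrow> real"
  assumes "n \<ge> 1"
    and "\<And>xs. length xs = n \<Longrightarrow> xs \<noteq> [] \<Longrightarrow> \<forall>x\<in>set xs. axial x \<Longrightarrow>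
           (\<integral>y. g (xs @ [y]) \<partial>measure_pmf (next_step_pmf d p xs)) = h xs"
  shows "(\<integral>xs. g xs \<partial>measure_pmf (merw_pmf d p (Suc n))) = (\<integral>xs. h xs \<partial>measure_pmf (merw_pmf d p n))"
proof -
  obtain m where m: "n = Suc m" using assms(1) by (cases n) auto
  have nonempty: "xs \<noteq> []" if "xs \<in> set_pmf (merw_pmf d p n)" for xs
    using length_merw_pmf[OF that] assms(1) by auto
  have "(\<integral>xs. g xs \<partial>measure_pmf (merw_pmf d p (Suc n)))
      = (\<integral>xs. (\<integral>y. g (xs @ [y]) \<partial>measure_pmf (next_step_pmf d p xs)) \<partial>measure_pmf (merw_pmf d p n))"
    unfolding m merw_pmf.simps
    by (subst integral_bind_pmf_finite)
       (auto simp: finite_set_pmf_merw_pmf finite_set_pmf_next_step_pmf m[symmetric] nonempty)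
  also have "\<dots> = (\<integral>xs. h xs \<partial>measure_pmf (merw_pmf d p n))"
    using assms(2) length_merw_pmf axial_merw_pmf nonempty
    by (intro integral_cong_AE AE_pmfI) auto
  finally show ?thesis .
qed

lemma integral_merw_pmf_nth:
  fixes f :: "(nat \<Rightarrow> real) \<Rightarrow> real"
  assumes "b < n"
  shows "(\<integral>xs. f (xs ! b) \<partial>measure_pmf (merw_pmf d p n))
    = (\<integral>xs. f (xs ! b) \<partial>measure_pmf (merw_pmf d p (Suc b)))"
  using assms[folded Suc_le_eq]
proof (induction n rule: dec_induct)
  case base
  show ?case ..
next
  case (step m)
  have "(\<integral>xs. f (xs ! b) \<partial>measure_pmf (merw_pmf d p (Suc m)))
      = (\<integral>xs. f (xs ! b) \<partial>measure_pmf (merw_pmf d p m))"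
    by (rule integral_merw_pmf_Suc) (use step.hyps(1) in \<open>auto simp: nth_append\<close>)
  then show ?case using step.IH by simp
qed

lemma integral_merw_pmf_steps_sum:
  assumes "i < d"
  shows "(\<integral>xs. steps_sum xs i \<partial>measure_pmf (merw_pmf d p n)) = 0"
proof (induction n rule: induct_nat_012)
  case 0
  show ?case by (simp add: steps_sum_def)
next
  case 1
  show ?case by (simp add: steps_sum_def integral_first_step_pmf_coord)
next
  case (ge2 n)
  have "(\<integral>xs. steps_sum xs i \<partial>measure_pmf (merw_pmf d p (Suc (Suc n))))
      = (\<integral>xs. (1 + merw_exponent d p / real (Suc n)) * steps_sum xs i \<partial>measure_pmf (merw_pmf d p (Suc n)))"
    by (rule integral_merw_pmf_Suc)
       (use assms in \<open>auto simp: integral_next_step_pmf_coord algebra_simps\<close>)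
  then show ?case
    using ge2.IH(2) by simp
qed

lemma integral_merw_pmf_nth_coord_mult:
  assumes "i \<noteq> j" "b < n"
  shows "(\<integral>xs. (xs ! b) i * (xs ! b) j \<partial>measure_pmf (merw_pmf d p n)) = 0"
proof -
  have "(\<integral>xs. (xs ! b) i * (xs ! b) j \<partial>measure_pmf (merw_pmf d p (Suc b))) = 0"
  proof (cases b)
    case 0
    have "(\<Sum>x\<in>axis_units d. x i * x j) = 0"
      using axial_axis_units assms(1) by (intro sum.neutral) (simp add: axial_def)
    then show ?thesis
      using 0 d_ge_1
      by (simp add: first_step_pmf_eq integral_pmf_of_set finite_axis_units axis_units_nonempty)
  next
    case (Suc m)
    have "(\<integral>xs. (xs ! b) i * (xs ! b) j \<partial>measure_pmf (merw_pmf d p (Suc b)))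
        = (\<integral>xs. 0 \<partial>measure_pmf (merw_pmf d p b))"
      by (rule integral_merw_pmf_Suc)
         (use assms Suc in \<open>auto simp: nth_append integral_next_step_pmf_coord_mult\<close>)
    then show ?thesis by simp
  qed
  then show ?thesis
    using integral_merw_pmf_nth[OF assms(2), of "\<lambda>x. x i * x j"] by simp
qed

lemma integral_merw_pmf_nth_coord_sq:
  assumes "i < d" "b < n"
  shows "(\<integral>xs. ((xs ! b) i)\<^sup>2 \<partial>measure_pmf (merw_pmf d p n)) = 1 / real d"
  using assms
proof (induction b arbitrary: i n rule: less_induct)
  case (less b)
  have reduce: "(\<integral>xs. ((xs ! b) i)\<^sup>2 \<partial>measure_pmf (merw_pmf d p n))
      = (\<integral>xs. ((xs ! b) i)\<^sup>2 \<partial>measure_pmf (merw_pmf d p (Suc b)))"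
    using less.prems(2) by (rule integral_merw_pmf_nth)
  show ?case
  proof (cases "b = 0")
    case True
    then show ?thesis
      using reduce less.prems integral_first_step_pmf_coord_mult[of i i]
      by (simp add: power2_eq_square)
  next
    case False
    define c where "c = (1 - p) / (2 * real d - 1)"
    have "(\<integral>xs. ((xs ! b) i)\<^sup>2 \<partial>measure_pmf (merw_pmf d p (Suc b)))
        = (\<integral>xs. (\<Sum>k<b. p * ((xs ! k) i)\<^sup>2 + c * (2 * (\<Sum>l<d. ((xs ! k) l)\<^sup>2) - ((xs ! k) i)\<^sup>2)) / real b
            \<partial>measure_pmf (merw_pmf d p b))"
      by (rule integral_merw_pmf_Suc)
         (use less.prems False in \<open>auto simp: nth_append integral_next_step_pmf_coord_sq c_def\<close>)
    also have "\<dots> = (\<Sum>k<b. p * (1 / real d) + c * (2 * (\<Sum>l<d. 1 / real d) - 1 / real d)) / real b"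
      using less.IH less.prems(1) by (simp add: sum_distrib_left sum_subtractf)
    also have "\<dots> = 1 / real d"
      using d_ge_1 False by (simp add: c_def field_simps)
    finally show ?thesis
      using reduce by simp
  qed
qed

lemma integral_merw_pmf_next_step_coord_mult:
  assumes "i < d" "j < d" "n \<ge> 1"
  shows "(\<integral>xs. (\<integral>y. y i * y j \<partial>measure_pmf (next_step_pmf d p xs)) \<partial>measure_pmf (merw_pmf d p n))
    = (if i = j then 1 / real d else 0)"
proof -
  have "(\<integral>xs. (\<integral>y. y i * y j \<partial>measure_pmf (next_step_pmf d p xs)) \<partial>measure_pmf (merw_pmf d p n))
      = (\<integral>xs. (xs ! n) i * (xs ! n) j \<partial>measure_pmf (merw_pmf d p (Suc n)))"
    by (rule integral_merw_pmf_Suc[symmetric]) (use assms in \<open>auto simp: nth_append\<close>)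
  then show ?thesis
    using integral_merw_pmf_nth_coord_mult[of i j n "Suc n"] integral_merw_pmf_nth_coord_sq[of i n "Suc n"]
      assms
    by (cases "i = j") (simp_all add: power2_eq_square)
qed

end

locale merw_supercritical = merw_params +
  assumes p_gt: "(2 * real d + 1) / (4 * real d) < p"
begin

lemma merw_exponent_gt_half: "merw_exponent d p > 1/2"
proof -
  have "2 * real d + 1 < 4 * real d * p"
    using p_gt d_ge_1 by (simp add: field_simps)
  moreover have "2 * real d - 1 > 0" using d_ge_1 by simp
  ultimately show ?thesis by (simp add: merw_exponent_def field_simps)
qed

lemma integral_merw_pmf_steps_sum_mult:
  assumes "i < d" "j < d" "n \<ge> 1"
  shows "(\<integral>xs. steps_sum xs i * steps_sum xs j \<partial>measure_pmf (merw_pmf d p n))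
    = (if i = j then merw_variance (merw_exponent d p) n / real d else 0)"
  using assms(3)
proof (induction n rule: dec_induct)
  case base
  show ?case
    using integral_first_step_pmf_coord_mult[OF assms(1,2)] merw_variance_1[OF merw_exponent_gt_half]
    by (simp add: steps_sum_def)
next
  case (step n)
  define a where "a = merw_exponent d p"
  have "(\<integral>xs. steps_sum xs i * steps_sum xs j \<partial>measure_pmf (merw_pmf d p (Suc n)))
      = (\<integral>xs. (1 + 2 * a / real n) * (steps_sum xs i * steps_sum xs j)
           + (\<integral>y. y i * y j \<partial>measure_pmf (next_step_pmf d p xs)) \<partial>measure_pmf (merw_pmf d p n))"
  proof (rule integral_merw_pmf_Suc[OF step.hyps(1)])
    fix xs :: "(nat \<Rightarrow> real) list"
    assume "length xs = n" "xs \<noteq> []"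
    then show "(\<integral>y. steps_sum (xs @ [y]) i * steps_sum (xs @ [y]) j \<partial>measure_pmf (next_step_pmf d p xs))
        = (1 + 2 * a / real n) * (steps_sum xs i * steps_sum xs j)
          + (\<integral>y. y i * y j \<partial>measure_pmf (next_step_pmf d p xs))"
      using assms
      by (simp add: algebra_simps integral_next_step_pmf_coord a_def)
  qed
  also have "\<dots> = (1 + 2 * a / real n) * (if i = j then merw_variance a n / real d else 0)
      + (if i = j then 1 / real d else 0)"
    using step.IH step.hyps assms
    by (simp add: integral_merw_pmf_next_step_coord_mult a_def)
  also have "\<dots> = (if i = j then merw_variance a (Suc n) / real d else 0)"
    using merw_variance_Suc[OF merw_exponent_gt_half step.hyps(1)]
    by (simp add: a_def add_divide_distrib)
  finally show ?case by (simp add: a_def)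
qed

text \<open>\<open>E[S\<^sub>m S\<^sub>n] = (B\<^sub>n/B\<^sub>m) E[S\<^sub>n\<^sup>2]\<close> for \<open>n \<le> m\<close>: the martingale property of \<open>B\<^sub>n S\<^sub>n\<close>, where
  \<open>B = gamma_ratio a\<close>.\<close>

lemma integral_merw_pmf_steps_sum_take:
  assumes "i < d" "n \<ge> 1" "n \<le> m"
  shows "(\<integral>xs. steps_sum xs i * steps_sum (take n xs) i \<partial>measure_pmf (merw_pmf d p m))
    = gamma_ratio (merw_exponent d p) n / gamma_ratio (merw_exponent d p) m
      * merw_variance (merw_exponent d p) n / real d"
  using assms(3)
proof (induction m rule: dec_induct)
  case base
  have "(\<integral>xs. steps_sum xs i * steps_sum (take n xs) i \<partial>measure_pmf (merw_pmf d p n))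
      = (\<integral>xs. steps_sum xs i * steps_sum xs i \<partial>measure_pmf (merw_pmf d p n))"
    using length_merw_pmf by (intro integral_cong_AE AE_pmfI) auto
  then show ?case
    using integral_merw_pmf_steps_sum_mult[OF assms(1) assms(1) assms(2)] merw_exponent_gt_half
      gamma_ratio_pos[of "merw_exponent d p" n] assms(2)
    by simp
next
  case (step m)
  define a where "a = merw_exponent d p"
  have a: "a > 0" "m \<ge> 1" using merw_exponent_gt_half step.hyps assms(2) by (auto simp: a_def)
  have "(\<integral>xs. steps_sum xs i * steps_sum (take n xs) i \<partial>measure_pmf (merw_pmf d p (Suc m)))
      = (\<integral>xs. (1 + a / real m) * (steps_sum xs i * steps_sum (take n xs) i) \<partial>measure_pmf (merw_pmf d p m))"
  proof (rule integral_merw_pmf_Suc[OF a(2)])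
    fix xs :: "(nat \<Rightarrow> real) list"
    assume "length xs = m" "xs \<noteq> []"
    then show "(\<integral>y. steps_sum (xs @ [y]) i * steps_sum (take n (xs @ [y])) i \<partial>measure_pmf (next_step_pmf d p xs))
        = (1 + a / real m) * (steps_sum xs i * steps_sum (take n xs) i)"
      using assms step.hyps
      by (simp add: algebra_simps integral_next_step_pmf_coord a_def)
  qed
  also have "\<dots> = (1 + a / real m) * (gamma_ratio a n / gamma_ratio a m * merw_variance a n / real d)"
    using step.IH by (simp add: a_def)
  also have "\<dots> = gamma_ratio a n / gamma_ratio a (Suc m) * merw_variance a n / real d"
    using gamma_ratio_pos[OF a] a by (simp add: gamma_ratio_Suc field_simps)
  finally show ?case by (simp add: a_def)
qed

end

section \<open>The limit of the rescaled walk\<close>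

locale merw_process = prob_space M + merw_supercritical d p
  for M :: "'a measure" and d p +
  fixes X :: "nat \<Rightarrow> 'a \<Rightarrow> nat \<Rightarrow> real"
  assumes is_MERW: "is_MERW M d p X"
begin

definition steps :: "nat \<Rightarrow> 'a \<Rightarrow> (nat \<Rightarrow> real) list" where
  "steps n \<omega> = map (\<lambda>k. X k \<omega>) [1..<Suc n]"

lemma measurable_steps: "(\<lambda>\<omega>. steps n \<omega>) \<in> measurable M (count_space UNIV)"
  and distr_steps: "distr M (count_space UNIV) (\<lambda>\<omega>. steps n \<omega>) = measure_pmf (merw_pmf d p n)"
  using is_MERW unfolding is_MERW_def steps_def[abs_def] by blast+

lemma integrable_steps: "integrable M (\<lambda>\<omega>. f (steps n \<omega>) :: real)"
proof -
  have "integrable (distr M (count_space UNIV) (\<lambda>\<omega>. steps n \<omega>)) f"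
    unfolding distr_steps by simp
  then show ?thesis
    by (simp add: integrable_distr_eq[OF measurable_steps])
qed

lemma integral_steps:
  fixes f :: "(nat \<Rightarrow> real) list \<Rightarrow> real"
  shows "(\<integral>\<omega>. f (steps n \<omega>) \<partial>M) = (\<integral>xs. f xs \<partial>measure_pmf (merw_pmf d p n))"
  using integral_distr[OF measurable_steps, of f] by (simp add: distr_steps)

lemma merw_pos_eq_steps_sum: "merw_pos X n \<omega> i = steps_sum (steps n \<omega>) i"
proof -
  have "steps_sum (steps n \<omega>) i = (\<Sum>k\<in>set [1..<Suc n]. X k \<omega> i)"
    unfolding steps_sum_def steps_def by (simp add: comp_def sum_list_distinct_conv_sum_set del: upt_Suc)
  also have "set [1..<Suc n] = {1..n}" by auto
  finally show ?thesis by (simp add: merw_pos_def)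
qed

lemma take_steps: "n \<le> m \<Longrightarrow> take n (steps m \<omega>) = steps n \<omega>"
  by (simp add: steps_def take_map take_upt del: upt_Suc)

lemma merw_pos_eq_steps_sum_take:
  "n \<le> m \<Longrightarrow> merw_pos X n \<omega> i = steps_sum (take n (steps m \<omega>)) i"
  by (simp add: take_steps merw_pos_eq_steps_sum)

lemma borel_measurable_merw_pos [measurable]: "(\<lambda>\<omega>. merw_pos X n \<omega> i) \<in> borel_measurable M"
  unfolding merw_pos_eq_steps_sum by (rule measurable_compose[OF measurable_steps]) simp

lemma integrable_merw_pos_pair: "integrable M (\<lambda>\<omega>. f (merw_pos X m \<omega> i) (merw_pos X n \<omega> j) :: real)"
  unfolding merw_pos_eq_steps_sum_take[OF max.cobounded1[of m n]]
    merw_pos_eq_steps_sum_take[OF max.cobounded2[of n m]]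
  by (rule integrable_steps)

lemma integral_merw_pos: "i < d \<Longrightarrow> (\<integral>\<omega>. merw_pos X n \<omega> i \<partial>M) = 0"
  using integral_steps[of "\<lambda>xs. steps_sum xs i" n]
  by (simp add: merw_pos_eq_steps_sum integral_merw_pmf_steps_sum)

lemma integral_merw_pos_mult:
  assumes "i < d" "j < d" "n \<ge> 1"
  shows "(\<integral>\<omega>. merw_pos X n \<omega> i * merw_pos X n \<omega> j \<partial>M)
    = (if i = j then merw_variance (merw_exponent d p) n / real d else 0)"
  using integral_steps[of "\<lambda>xs. steps_sum xs i * steps_sum xs j" n]
    integral_merw_pmf_steps_sum_mult[OF assms]
  by (simp add: merw_pos_eq_steps_sum)

lemma integral_merw_pos_mult_earlier:
  assumes "i < d" "1 \<le> n" "n \<le> m"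
  shows "(\<integral>\<omega>. merw_pos X m \<omega> i * merw_pos X n \<omega> i \<partial>M)
    = gamma_ratio (merw_exponent d p) n / gamma_ratio (merw_exponent d p) m
      * merw_variance (merw_exponent d p) n / real d"
  unfolding merw_pos_eq_steps_sum_take[OF assms(3)]
  unfolding merw_pos_eq_steps_sum integral_steps[of "\<lambda>xs. steps_sum xs i * steps_sum (take n xs) i" m]
  by (rule integral_merw_pmf_steps_sum_take[OF assms])

definition merw_martingale :: "nat \<Rightarrow> 'a \<Rightarrow> nat \<Rightarrow> real" where
  "merw_martingale n \<omega> i = gamma_ratio (merw_exponent d p) n * merw_pos X n \<omega> i"

lemma borel_measurable_merw_martingale [measurable]:
  "(\<lambda>\<omega>. merw_martingale n \<omega> i) \<in> borel_measurable M"
  unfolding merw_martingale_def by measurable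

lemma integrable_merw_martingale_pair:
  "integrable M (\<lambda>\<omega>. f (merw_martingale m \<omega> i) (merw_martingale n \<omega> j) :: real)"
  unfolding merw_martingale_def
  by (rule integrable_merw_pos_pair[where f = "\<lambda>x y. f (gamma_ratio _ m * x) (gamma_ratio _ n * y)"])

lemma integral_merw_martingale_mult:
  assumes "i < d" "j < d" "n \<ge> 1"
  shows "(\<integral>\<omega>. merw_martingale n \<omega> i * merw_martingale n \<omega> j \<partial>M)
    = (if i = j then martingale_variance (merw_exponent d p) n / real d else 0)"
proof -
  have "(\<lambda>\<omega>. merw_martingale n \<omega> i * merw_martingale n \<omega> j)
      = (\<lambda>\<omega>. (gamma_ratio (merw_exponent d p) n)\<^sup>2 * (merw_pos X n \<omega> i * merw_pos X n \<omega> j))"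
    by (simp add: merw_martingale_def power2_eq_square ac_simps)
  then show ?thesis
    using assms by (simp add: integral_merw_pos_mult martingale_variance_def)
qed

lemma integral_merw_martingale_increment_sq:
  assumes "i < d" "1 \<le> n" "n \<le> m"
  shows "(\<integral>\<omega>. (merw_martingale m \<omega> i - merw_martingale n \<omega> i)\<^sup>2 \<partial>M)
    = (martingale_variance (merw_exponent d p) m - martingale_variance (merw_exponent d p) n) / real d"
proof -
  define a where "a = merw_exponent d p"
  define Bm Bn where "Bm = gamma_ratio a m" and "Bn = gamma_ratio a n"
  have "Bm > 0"
    using merw_exponent_gt_half assms by (auto simp: Bm_def a_def intro!: gamma_ratio_pos)
  have "(\<lambda>\<omega>. (merw_martingale m \<omega> i - merw_martingale n \<omega> i)\<^sup>2)
      = (\<lambda>\<omega>. Bm\<^sup>2 * (merw_pos X m \<omega> i * merw_pos X m \<omega> i)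
        - 2 * Bm * Bn * (merw_pos X m \<omega> i * merw_pos X n \<omega> i)
        + Bn\<^sup>2 * (merw_pos X n \<omega> i * merw_pos X n \<omega> i))"
    by (simp add: merw_martingale_def Bm_def Bn_def a_def power2_eq_square algebra_simps)
  then have "(\<integral>\<omega>. (merw_martingale m \<omega> i - merw_martingale n \<omega> i)\<^sup>2 \<partial>M)
      = Bm\<^sup>2 * (\<integral>\<omega>. merw_pos X m \<omega> i * merw_pos X m \<omega> i \<partial>M)
        - 2 * Bm * Bn * (\<integral>\<omega>. merw_pos X m \<omega> i * merw_pos X n \<omega> i \<partial>M)
        + Bn\<^sup>2 * (\<integral>\<omega>. merw_pos X n \<omega> i * merw_pos X n \<omega> i \<partial>M)"
    by (simp add: integrable_merw_pos_pair)
  also have "\<dots> = Bm\<^sup>2 * (merw_variance a m / real d)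
      - 2 * Bm * Bn * (Bn / Bm * merw_variance a n / real d) + Bn\<^sup>2 * (merw_variance a n / real d)"
    using assms by (simp add: integral_merw_pos_mult integral_merw_pos_mult_earlier Bm_def Bn_def a_def)
  also have "\<dots> = (martingale_variance a m - martingale_variance a n) / real d"
    using \<open>Bm > 0\<close> d_ge_1
    by (simp add: martingale_variance_def Bm_def[symmetric] Bn_def[symmetric] field_simps power2_eq_square)
  finally show ?thesis by (simp add: a_def)
qed

end

locale merw_limit = merw_process +
  fixes L :: "'a \<Rightarrow> nat \<Rightarrow> real"
  assumes borel_measurable_L: "\<forall>i<d. (\<lambda>\<omega>. L \<omega> i) \<in> borel_measurable M"
    and AE_tendsto_L:
      "AE \<omega> in M. \<forall>i<d. (\<lambda>n. real n powr (- merw_exponent d p) * merw_pos X n \<omega> i) \<longlonglongrightarrow> L \<omega> i"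
begin

lemma AE_merw_martingale_tendsto: "AE \<omega> in M. \<forall>i<d. (\<lambda>n. merw_martingale n \<omega> i) \<longlonglongrightarrow> L \<omega> i"
  using AE_tendsto_L
proof eventually_elim
  case (elim \<omega>)
  define a where "a = merw_exponent d p"
  show ?case
  proof (intro allI impI)
    fix i assume "i < d"
    have "(\<lambda>n. (gamma_ratio a n * real n powr a) * (real n powr (- a) * merw_pos X n \<omega> i))
        \<longlonglongrightarrow> 1 * L \<omega> i"
      using elim \<open>i < d\<close> merw_exponent_gt_half
      by (intro tendsto_mult gamma_ratio_asymp) (auto simp: a_def)
    moreover have "\<forall>\<^sub>F n in sequentially. (gamma_ratio a n * real n powr a) * (real n powr (- a) * merw_pos X n \<omega> i)
        = merw_martingale n \<omega> i"
      using eventually_ge_at_top[of 1]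
      by eventually_elim (simp add: merw_martingale_def a_def powr_minus field_simps)
    ultimately show "(\<lambda>n. merw_martingale n \<omega> i) \<longlonglongrightarrow> L \<omega> i"
      by (simp add: tendsto_cong)
  qed
qed

lemma limit_minus_merw_martingale:
  assumes "i < d" "1 \<le> n"
  shows "integrable M (\<lambda>\<omega>. (L \<omega> i - merw_martingale n \<omega> i)\<^sup>2)"
    and "(\<integral>\<omega>. (L \<omega> i - merw_martingale n \<omega> i)\<^sup>2 \<partial>M)
      \<le> (limit_variance (merw_exponent d p)
          - martingale_variance (merw_exponent d p) n) / real d"
proof -
  have conv: "AE \<omega> in M. (\<lambda>m. merw_martingale m \<omega> i) \<longlonglongrightarrow> L \<omega> i"
    using AE_merw_martingale_tendsto by eventually_elim (use assms(1) in blast)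
  have lim: "(\<lambda>m. \<integral>\<omega>. (merw_martingale m \<omega> i - merw_martingale n \<omega> i)\<^sup>2 \<partial>M)
      \<longlonglongrightarrow> (limit_variance (merw_exponent d p)
          - martingale_variance (merw_exponent d p) n) / real d"
  proof -
    have "(\<lambda>m. (martingale_variance (merw_exponent d p) m - martingale_variance (merw_exponent d p) n)
        / real d) \<longlonglongrightarrow> (limit_variance (merw_exponent d p)
          - martingale_variance (merw_exponent d p) n) / real d"
      using d_ge_1 by (intro tendsto_divide tendsto_diff tendsto_const martingale_variance_limit
          merw_exponent_gt_half) auto
    moreover have "\<forall>\<^sub>F m in sequentially.
        (martingale_variance (merw_exponent d p) m - martingale_variance (merw_exponent d p) n) / real d
        = (\<integral>\<omega>. (merw_martingale m \<omega> i - merw_martingale n \<omega> i)\<^sup>2 \<partial>M)"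
      using eventually_ge_at_top[of n]
      by eventually_elim (use assms in \<open>simp add: integral_merw_martingale_increment_sq\<close>)
    ultimately show ?thesis by (rule Lim_transform_eventually)
  qed
  show "integrable M (\<lambda>\<omega>. (L \<omega> i - merw_martingale n \<omega> i)\<^sup>2)"
    and "(\<integral>\<omega>. (L \<omega> i - merw_martingale n \<omega> i)\<^sup>2 \<partial>M)
      \<le> (limit_variance (merw_exponent d p)
          - martingale_variance (merw_exponent d p) n) / real d"
    using integral_square_diff_limit_le[OF borel_measurable_merw_martingale[of _ i]
        borel_measurable_L[rule_format, OF assms(1)] borel_measurable_merw_martingale[of n i] conv
        integrable_merw_martingale_pair[where f = "\<lambda>x y. (x - y)\<^sup>2" and j = i] lim] .
qed

lemma integral_merw_martingale_minus_limit_tendsto: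
  assumes "i < d"
  shows "(\<lambda>n. \<integral>\<omega>. (merw_martingale (Suc n) \<omega> i - L \<omega> i)\<^sup>2 \<partial>M) \<longlonglongrightarrow> 0"
proof (rule tendsto_sandwich)
  show "\<forall>\<^sub>F n in sequentially. 0 \<le> (\<integral>\<omega>. (merw_martingale (Suc n) \<omega> i - L \<omega> i)\<^sup>2 \<partial>M)"
    by simp
  show "\<forall>\<^sub>F n in sequentially. (\<integral>\<omega>. (merw_martingale (Suc n) \<omega> i - L \<omega> i)\<^sup>2 \<partial>M)
      \<le> (limit_variance (merw_exponent d p)
          - martingale_variance (merw_exponent d p) (Suc n)) / real d"
    using limit_minus_merw_martingale(2)[OF assms] by (simp add: power2_commute)
  have "(\<lambda>n. limit_variance (merw_exponent d p) - martingale_variance (merw_exponent d p) (Suc n))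
      \<longlonglongrightarrow> limit_variance (merw_exponent d p) - limit_variance (merw_exponent d p)"
    by (intro tendsto_diff tendsto_const LIMSEQ_Suc martingale_variance_limit merw_exponent_gt_half)
  then show "(\<lambda>n. (limit_variance (merw_exponent d p)
          - martingale_variance (merw_exponent d p) (Suc n)) / real d) \<longlonglongrightarrow> 0"
    by (intro tendsto_divide_zero) simp
qed simp

lemma borel_measurable_limit: "i < d \<Longrightarrow> (\<lambda>\<omega>. L \<omega> i) \<in> borel_measurable M"
  by (rule borel_measurable_L[rule_format])

lemma square_integrable_limit:
  assumes "i < d"
  shows "integrable M (\<lambda>\<omega>. (L \<omega> i)\<^sup>2)"
  using borel_measurable_limit[OF assms] limit_minus_merw_martingale(1)[OF assms order_refl]
    integrable_merw_martingale_pair[where f = "\<lambda>x y. x\<^sup>2" and m = 1 and i = i and n = 1 and j = i]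
  by (rule integrable_square_of_square_diff)

lemma integral_limit_mult:
  assumes "i < d" "j < d"
  shows "(\<integral>\<omega>. L \<omega> i * L \<omega> j \<partial>M)
    = (if i = j then limit_variance (merw_exponent d p) / real d else 0)"
proof (rule LIMSEQ_unique)
  show "(\<lambda>n. \<integral>\<omega>. merw_martingale (Suc n) \<omega> i * merw_martingale (Suc n) \<omega> j \<partial>M)
      \<longlonglongrightarrow> (\<integral>\<omega>. L \<omega> i * L \<omega> j \<partial>M)"
    using assms
    by (intro integral_mult_tendsto_of_L2 borel_measurable_merw_martingale borel_measurable_limit
        square_integrable_limit integral_merw_martingale_minus_limit_tendsto
        integrable_merw_martingale_pair[where f = "\<lambda>x y. x\<^sup>2"])
  show "(\<lambda>n. \<integral>\<omega>. merw_martingale (Suc n) \<omega> i * merw_martingale (Suc n) \<omega> j \<partial>M)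
      \<longlonglongrightarrow> (if i = j then limit_variance (merw_exponent d p) / real d else 0)"
    using assms LIMSEQ_Suc[OF martingale_variance_limit[OF merw_exponent_gt_half]]
    by (simp add: integral_merw_martingale_mult divide_inverse tendsto_mult_right)
qed

lemma integral_limit:
  assumes "i < d"
  shows "(\<integral>\<omega>. L \<omega> i \<partial>M) = 0"
proof (rule LIMSEQ_unique)
  have "(\<lambda>n. \<integral>\<omega>. merw_martingale (Suc n) \<omega> i * 1 \<partial>M) \<longlonglongrightarrow> (\<integral>\<omega>. L \<omega> i * 1 \<partial>M)"
    using assms
    by (intro integral_mult_tendsto_of_L2 borel_measurable_merw_martingale borel_measurable_limit
        square_integrable_limit integral_merw_martingale_minus_limit_tendsto
        integrable_merw_martingale_pair[where f = "\<lambda>x y. x\<^sup>2"]) simp_all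
  then show "(\<lambda>n. \<integral>\<omega>. merw_martingale (Suc n) \<omega> i \<partial>M) \<longlonglongrightarrow> (\<integral>\<omega>. L \<omega> i \<partial>M)"
    by simp
  show "(\<lambda>n. \<integral>\<omega>. merw_martingale (Suc n) \<omega> i \<partial>M) \<longlonglongrightarrow> 0"
    using assms by (simp add: merw_martingale_def integral_merw_pos)
qed

end

theorem theorem3p8:
  fixes M :: "'a measure" and d :: nat and p a :: real
    and X :: "nat \<Rightarrow> 'a \<Rightarrow> nat \<Rightarrow> real" and L :: "'a \<Rightarrow> nat \<Rightarrow> real"
  assumes "prob_space M"
    and "d \<ge> 1"
    and "(2 * real d + 1) / (4 * real d) < p" and "p \<le> 1"
    and "is_MERW M d p X"
    and "a = (2 * real d * p - 1) / (2 * real d - 1)"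
    and "\<forall>i<d. (\<lambda>\<omega>. L \<omega> i) \<in> borel_measurable M"
    and "AE \<omega> in M. \<forall>i<d.
           (\<lambda>n. real n powr (- a) * merw_pos X n \<omega> i) \<longlonglongrightarrow> L \<omega> i"
  shows "(\<forall>i<d. integrable M (\<lambda>\<omega>. L \<omega> i) \<and> (\<integral>\<omega>. L \<omega> i \<partial>M) = 0)
       \<and> (\<forall>i<d. \<forall>j<d. integrable M (\<lambda>\<omega>. L \<omega> i * L \<omega> j)
            \<and> (\<integral>\<omega>. L \<omega> i * L \<omega> j \<partial>M)
                = (if i = j then 1 / (real d * (2 * a - 1) * Gamma (2 * a)) else 0))
       \<and> (\<integral>\<omega>. (\<Sum>i<d. (L \<omega> i)\<^sup>2) \<partial>M) = 1 / ((2 * a - 1) * Gamma (2 * a))"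
proof -
  have a: "a = merw_exponent d p"
    using assms(6) by (simp add: merw_exponent_def)
  have "0 < (2 * real d + 1) / (4 * real d)"
    using assms(2) by simp
  then have "0 \<le> p"
    using assms(3) by linarith
  then interpret merw_limit M d p X L
    using assms
    by (simp add: merw_limit_def merw_limit_axioms_def merw_process_def merw_process_axioms_def
        merw_supercritical_def merw_supercritical_axioms_def merw_params_def a[symmetric])
  have integrable_L: "integrable M (\<lambda>\<omega>. L \<omega> i)" if "i < d" for i
    using borel_measurable_limit[OF that] square_integrable_limit[OF that]
    by (rule square_integrable_imp_integrable)
  have integrable_LL: "integrable M (\<lambda>\<omega>. L \<omega> i * L \<omega> j)" if "i < d" "j < d" for i j
    using that
    by (intro integrable_mult_of_square_integrable borel_measurable_limit square_integrable_limit)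
  have cov: "(\<integral>\<omega>. L \<omega> i * L \<omega> j \<partial>M) = (if i = j then 1 / (real d * (2 * a - 1) * Gamma (2 * a)) else 0)"
    if "i < d" "j < d" for i j
    using integral_limit_mult[OF that] by (simp add: a limit_variance_def)
  have "(\<integral>\<omega>. (\<Sum>i<d. (L \<omega> i)\<^sup>2) \<partial>M) = (\<Sum>i<d. \<integral>\<omega>. L \<omega> i * L \<omega> i \<partial>M)"
    using square_integrable_limit by (simp add: power2_eq_square)
  also have "\<dots> = 1 / ((2 * a - 1) * Gamma (2 * a))"
    using cov assms(2) by simp
  finally show ?thesis
    using integrable_L integral_limit integrable_LL cov by simp
qed

end
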